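(* Let $d=r=1$, assume (A1), and let $(\rho_n,h_n,\varepsilon_n)$ be positive numbers tending to $0$ with $T/h_n$ integers. Then there exists $c>0$ such that, for all $n$ large enough, all $\mu\in C([0,T];\mathcal{P}_1(\mathbb{R}))$, all $i,j\in\mathbb{Z}$ and all $k=0,\dots,N_n-1$ (with $N_n=T/h_n$): $\min\big\{|\Phi^{+}_{i,k}[\mu]-\Phi^{+}_{j,k}[\mu]|^2,\ |\Phi^{-}_{i,k}[\mu]-\Phi^{-}_{j,k}[\mu]|^2\big\}\ge(1-ch_n)|x_i-x_j|^2$, and consequently $\frac12\sum_{j\in\mathbb{Z}}\big[\beta_i(\Phi^{+}_{j,k}[\mu])+\beta_i(\Phi^{-}_{j,k}[\mu])\big]\le1+ch_n$ for all $i\in\mathbb{Z}$, $k=0,\dots,N_n-1$, where all objects are computed with parameters $(\rho,h,\varepsilon)=(\rho_n,h_n,\varepsilon_n)$.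
   Context: $\mathcal{P}_1(\mathbb{R})$: probability measures with finite first moment, 1-Wasserstein distance. Assumption (A1) (for $d=r=1$): $F,G:\mathbb{R}\times\mathcal{P}_1\to\mathbb{R}$ uniformly bounded, $F(\cdot,m),G(\cdot,m)\in C^2$ with first and second derivatives bounded uniformly in $x,m$; $\sigma:[0,T]\to\mathbb{R}$ continuous; $m_0$ absolutely continuous with bounded compactly supported density. Grid $x_i=i\rho$, $t_k=kh$; $\beta_i$ is the piecewise affine hat function with $\beta_i(x_j)=\delta_{ij}$; $I[f]=\sum_if_i\beta_i$. Discrete HJB: $v_{i,N}=G(x_i,\mu(T))$, $v_{i,k}=\inf_{\alpha\in\mathbb{R}}\big[\frac12(I[v_{\cdot,k+1}](x_i-h\alpha+\sqrt h\sigma(t_k))+I[v_{\cdot,k+1}](x_i-h\alpha-\sqrt h\sigma(t_k)))+\frac12h\alpha^2+hF(x_i,\mu(t_k))\big]$; $v_{\rho,h}[\mu](x,t)=I[v_{\cdot,[t/h]}](x)$; $v^\varepsilon_{\rho,h}[\mu](\cdot,t)=\phi_\varepsilon*v_{\rho,h}[\mu](\cdot,t)$ with $\phi_\varepsilon=\varepsilon^{-1}\phi(\cdot/\varepsilon)$ for a fixed $\phi\in C_c^\infty(\mathbb{R})$, $\phi\ge0$, $\int\phi=1$. $\Phi^{\pm}_{i,k}[\mu]=x_i-h\,Dv^\varepsilon_{\rho,h}[\mu](x_i,t_k)\pm\sqrt h\,\sigma(t_k)$. *)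

theory Defs
  imports "HOL-Analysis.Analysis" "HOL-Probability.Probability"
begin

definition P1 :: "real measure \<Rightarrow> bool" where
  "P1 m \<longleftrightarrow> prob_space m \<and> sets m = sets borel \<and> integrable m (\<lambda>x. \<bar>x\<bar>)"

definition couplings :: "real measure \<Rightarrow> real measure \<Rightarrow> (real \<times> real) measure set" where
  "couplings m n = {\<gamma>. prob_space \<gamma> \<and> sets \<gamma> = sets (borel \<Otimes>\<^sub>M borel) \<and>
      distr \<gamma> borel fst = m \<and> distr \<gamma> borel snd = n}"

definition W1 :: "real measure \<Rightarrow> real measure \<Rightarrow> real" where
  "W1 m n = (INF \<gamma>\<in>couplings m n. \<integral>p. \<bar>fst p - snd p\<bar> \<partial>\<gamma>)"

definition cont_P1_path :: "real \<Rightarrow> (real \<Rightarrow> real measure) \<Rightarrow> bool" where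
  "cont_P1_path T \<mu> \<longleftrightarrow> (\<forall>t\<in>{0..T}. P1 (\<mu> t)) \<and>
     (\<forall>t\<in>{0..T}. \<forall>e>0. \<exists>d>0. \<forall>s\<in>{0..T}. \<bar>s - t\<bar> < d \<longrightarrow> W1 (\<mu> s) (\<mu> t) < e)"

definition A1_coeff :: "(real \<Rightarrow> real measure \<Rightarrow> real) \<Rightarrow> bool" where
  "A1_coeff F \<longleftrightarrow> (\<exists>C. \<forall>m. P1 m \<longrightarrow> (\<forall>x.
      \<bar>F x m\<bar> \<le> C \<and>
      (\<lambda>y. F y m) differentiable (at x) \<and>
      deriv (\<lambda>y. F y m) differentiable (at x) \<and>
      isCont (deriv (deriv (\<lambda>y. F y m))) x \<and>
      \<bar>deriv (\<lambda>y. F y m) x\<bar> \<le> C \<and>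
      \<bar>deriv (deriv (\<lambda>y. F y m)) x\<bar> \<le> C))"

definition hat :: "real \<Rightarrow> int \<Rightarrow> real \<Rightarrow> real" where
  "hat \<rho> i x = max 0 (1 - \<bar>x - real_of_int i * \<rho>\<bar> / \<rho>)"

definition interp :: "real \<Rightarrow> (int \<Rightarrow> real) \<Rightarrow> real \<Rightarrow> real" where
  "interp \<rho> f x = infsum (\<lambda>i. f i * hat \<rho> i x) UNIV"

text \<open>vback ... N m i = v_{i, N-m}\<close>
fun vback :: "real \<Rightarrow> real \<Rightarrow> (real \<Rightarrow> real) \<Rightarrow> (real \<Rightarrow> real measure \<Rightarrow> real) \<Rightarrow>
   (real \<Rightarrow> real measure \<Rightarrow> real) \<Rightarrow> (real \<Rightarrow> real measure) \<Rightarrow> nat \<Rightarrow> nat \<Rightarrow> int \<Rightarrow> real" where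
  "vback \<rho> h \<sigma> F G \<mu> N 0 i = G (real_of_int i * \<rho>) (\<mu> (real N * h))"
| "vback \<rho> h \<sigma> F G \<mu> N (Suc m) i =
     (let x = real_of_int i * \<rho>; t = real (N - Suc m) * h;
          w = interp \<rho> (vback \<rho> h \<sigma> F G \<mu> N m)
      in (INF \<alpha>::real. (w (x - h * \<alpha> + sqrt h * \<sigma> t) + w (x - h * \<alpha> - sqrt h * \<sigma> t)) / 2
                       + h * \<alpha>\<^sup>2 / 2 + h * F x (\<mu> t)))"

definition vgrid :: "real \<Rightarrow> real \<Rightarrow> (real \<Rightarrow> real) \<Rightarrow> (real \<Rightarrow> real measure \<Rightarrow> real) \<Rightarrow>
   (real \<Rightarrow> real measure \<Rightarrow> real) \<Rightarrow> (real \<Rightarrow> real measure) \<Rightarrow> nat \<Rightarrow> nat \<Rightarrow> int \<Rightarrow> real" where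
  "vgrid \<rho> h \<sigma> F G \<mu> N k i = vback \<rho> h \<sigma> F G \<mu> N (N - k) i"

definition vrh :: "real \<Rightarrow> real \<Rightarrow> (real \<Rightarrow> real) \<Rightarrow> (real \<Rightarrow> real measure \<Rightarrow> real) \<Rightarrow>
   (real \<Rightarrow> real measure \<Rightarrow> real) \<Rightarrow> (real \<Rightarrow> real measure) \<Rightarrow> nat \<Rightarrow> real \<Rightarrow> real \<Rightarrow> real" where
  "vrh \<rho> h \<sigma> F G \<mu> N x t = interp \<rho> (vgrid \<rho> h \<sigma> F G \<mu> N (nat \<lfloor>t / h\<rfloor>)) x"

definition mollifier :: "(real \<Rightarrow> real) \<Rightarrow> bool" where
  "mollifier \<phi> \<longleftrightarrow> (\<forall>n x. ((deriv ^^ n) \<phi>) differentiable (at x)) \<and>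
     (\<exists>R. \<forall>x. \<bar>x\<bar> > R \<longrightarrow> \<phi> x = 0) \<and> (\<forall>x. \<phi> x \<ge> 0) \<and>
     integrable lborel \<phi> \<and> integral\<^sup>L lborel \<phi> = 1"

definition phi_eps :: "(real \<Rightarrow> real) \<Rightarrow> real \<Rightarrow> real \<Rightarrow> real" where
  "phi_eps \<phi> \<epsilon> x = \<phi> (x / \<epsilon>) / \<epsilon>"

definition veps :: "(real \<Rightarrow> real) \<Rightarrow> real \<Rightarrow> real \<Rightarrow> real \<Rightarrow> (real \<Rightarrow> real) \<Rightarrow>
   (real \<Rightarrow> real measure \<Rightarrow> real) \<Rightarrow> (real \<Rightarrow> real measure \<Rightarrow> real) \<Rightarrow> (real \<Rightarrow> real measure) \<Rightarrow>
   nat \<Rightarrow> real \<Rightarrow> real \<Rightarrow> real" where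
  "veps \<phi> \<epsilon> \<rho> h \<sigma> F G \<mu> N x t =
     (\<integral>y. phi_eps \<phi> \<epsilon> (x - y) * vrh \<rho> h \<sigma> F G \<mu> N y t \<partial>lborel)"

text \<open>Phi^{+-}_{i,k}[mu] = x_i - h Dv^eps(x_i,t_k) +- sqrt h sigma(t_k); s = 1 or s = -1\<close>
definition Phi :: "real \<Rightarrow> (real \<Rightarrow> real) \<Rightarrow> real \<Rightarrow> real \<Rightarrow> real \<Rightarrow> (real \<Rightarrow> real) \<Rightarrow>
   (real \<Rightarrow> real measure \<Rightarrow> real) \<Rightarrow> (real \<Rightarrow> real measure \<Rightarrow> real) \<Rightarrow> (real \<Rightarrow> real measure) \<Rightarrow>
   nat \<Rightarrow> int \<Rightarrow> nat \<Rightarrow> real" where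
  "Phi s \<phi> \<epsilon> \<rho> h \<sigma> F G \<mu> N i k =
     real_of_int i * \<rho>
     - h * deriv (\<lambda>x. veps \<phi> \<epsilon> \<rho> h \<sigma> F G \<mu> N x (real k * h)) (real_of_int i * \<rho>)
     + s * sqrt h * \<sigma> (real k * h)"

end

theory Submission
  imports Defs
begin

text \<open>The grid values \<open>v\<^sub>\<cdot>\<^sub>,\<^sub>k\<close> are discretely semiconcave: their second
  differences are at most \<open>K \<rho>\<^sup>2\<close> with \<open>K = C\<^sub>G + T C\<^sub>F\<close>.  The scheme propagates
  this backwards in time because neighbouring nodes may use the same control, and interpolation
  followed by mollification turns it into the one-sided Lipschitz bound
  \<open>Dv\<^sup>\<epsilon>(x) - Dv\<^sup>\<epsilon>(y) \<le> K (x - y)\<close> for \<open>y \<le> x\<close>.  Hence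
  \<open>\<Phi>\<^sup>\<plusminus>\<^sub>i\<^sub>,\<^sub>k - \<Phi>\<^sup>\<plusminus>\<^sub>j\<^sub>,\<^sub>k \<ge> (1 - h K)(x\<^sub>i - x\<^sub>j)\<close> for \<open>j \<le> i\<close>, which gives the
  first estimate with \<open>c = 2 K\<close>.  Consecutive points \<open>\<Phi>\<^sub>j\<close> are then at least
  \<open>3\<rho>/4\<close> apart, so at most three of them meet the support of \<open>\<beta>\<^sub>i\<close>, and their hat values
  add up to at most \<open>1 + 2 h K\<close>.\<close>

section \<open>Grid functions and their piecewise affine interpolation\<close>

lemma hat_eq_tent: "\<rho> > 0 \<Longrightarrow> hat \<rho> q x = max 0 (1 - \<bar>x / \<rho> - real_of_int q\<bar>)"
proof -
  assume r: "\<rho> > 0"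
  have "\<bar>x - real_of_int q * \<rho>\<bar> / \<rho> = \<bar>(x - real_of_int q * \<rho>) / \<rho>\<bar>" using r by simp
  also have "(x - real_of_int q * \<rho>) / \<rho> = x/\<rho> - real_of_int q" using r by (simp add: field_simps)
  finally show ?thesis unfolding hat_def by simp
qed

lemma interp_eq_sum:
  assumes "finite S" "\<And>q. q \<notin> S \<Longrightarrow> hat \<rho> q x = 0"
  shows "interp \<rho> f x = (\<Sum>q\<in>S. f q * hat \<rho> q x)"
proof -
  have "interp \<rho> f x = infsum (\<lambda>q. f q * hat \<rho> q x) S"
    unfolding interp_def by (rule infsum_cong_neutral) (use assms in auto)
  then show ?thesis using assms by simp
qed

lemma interp_eq_floor:
  assumes r: "\<rho> > 0"
  shows "interp \<rho> f x = (1 - (x/\<rho> - \<lfloor>x/\<rho>\<rfloor>)) * f \<lfloor>x/\<rho>\<rfloor> + (x/\<rho> - \<lfloor>x/\<rho>\<rfloor>) * f (\<lfloor>x/\<rho>\<rfloor> + 1)"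
proof -
  define p where "p = \<lfloor>x/\<rho>\<rfloor>"
  have p: "real_of_int p \<le> x/\<rho>" "x/\<rho> < real_of_int p + 1" unfolding p_def by linarith+
  have "hat \<rho> q x = 0" if "q \<notin> {p, p+1}" for q
  proof -
    have "q \<le> p - 1 \<or> q \<ge> p + 2" using that by auto
    then have "real_of_int q \<le> real_of_int p - 1 \<or> real_of_int q \<ge> real_of_int p + 2" by linarith
    then have "\<bar>x/\<rho> - real_of_int q\<bar> \<ge> 1" using p by linarith
    then show ?thesis using hat_eq_tent[OF r] by simp
  qed
  then have "interp \<rho> f x = f p * hat \<rho> p x + f (p+1) * hat \<rho> (p+1) x"
    by (subst interp_eq_sum[of "{p, p+1}"]) auto
  also have "hat \<rho> p x = 1 - (x/\<rho> - p)" using hat_eq_tent[OF r, of p x] p by simp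
  also have "hat \<rho> (p+1) x = x/\<rho> - p" using hat_eq_tent[OF r, of "p+1" x] p by simp
  finally show ?thesis unfolding p_def by simp
qed

lemma interp_shift:
  assumes r: "\<rho> > 0"
  shows "interp \<rho> f (x + real_of_int m * \<rho>) = interp \<rho> (\<lambda>q. f (q + m)) x"
proof -
  have e: "(x + real_of_int m * \<rho>)/\<rho> = x/\<rho> + real_of_int m" using r by (simp add: field_simps)
  show ?thesis unfolding interp_eq_floor[OF r] e by (simp add: algebra_simps)
qed

lemma interp_linear:
  assumes "\<rho> > 0"
  shows "interp \<rho> (\<lambda>q. a * f q + b * g q + c * real_of_int q) x
    = a * interp \<rho> f x + b * interp \<rho> g x + c * (x/\<rho>)"
  unfolding interp_eq_floor[OF assms] by (simp add: algebra_simps)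

lemma interp_le:
  assumes r: "\<rho> > 0" and le: "\<And>q. f q \<le> B"
  shows "interp \<rho> f x \<le> B"
proof -
  define t where "t = x/\<rho> - \<lfloor>x/\<rho>\<rfloor>"
  have t: "0 \<le> t" "t \<le> 1" unfolding t_def by linarith+
  have "(1 - t) * f \<lfloor>x/\<rho>\<rfloor> + t * f (\<lfloor>x/\<rho>\<rfloor> + 1) \<le> (1 - t) * B + t * B"
    using t le by (intro add_mono mult_left_mono) auto
  then show ?thesis unfolding interp_eq_floor[OF r] t_def[symmetric] by (simp add: algebra_simps)
qed

lemma interp_abs_le:
  assumes r: "\<rho> > 0" and le: "\<And>q. \<bar>f q\<bar> \<le> B"
  shows "\<bar>interp \<rho> f x\<bar> \<le> B"
proof -
  have "interp \<rho> f x \<le> B" using le by (intro interp_le[OF r]) (simp add: abs_le_iff)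
  moreover have "- interp \<rho> f x \<le> B"
    using interp_linear[OF r, of "-1" f 0 f 0 x] interp_le[OF r, of "\<lambda>q. - f q" B x] le
    by (simp add: abs_le_iff)
  ultimately show ?thesis by simp
qed

lemma int_steps_lower_bound:
  fixes z :: "int \<Rightarrow> real"
  assumes step: "\<And>j. z (j+1) - z j \<ge> \<delta>" and "p \<le> q"
  shows "z q - z p \<ge> real_of_int (q - p) * \<delta>"
  using \<open>p \<le> q\<close>
proof (induction q rule: int_ge_induct)
  case (step i)
  have "real_of_int (i + 1 - p) * \<delta> = real_of_int (i - p) * \<delta> + \<delta>" by (simp add: algebra_simps)
  then show ?case using step.IH assms(1)[of i] by linarith
qed simp

lemma interp_antimono:
  assumes r: "\<rho> > 0" and dec: "\<And>q. f (q+1) \<le> f q" and xy: "x \<le> y"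
  shows "interp \<rho> f y \<le> interp \<rho> f x"
proof -
  define p where "p = \<lfloor>x/\<rho>\<rfloor>"
  define p' where "p' = \<lfloor>y/\<rho>\<rfloor>"
  define t where "t = x/\<rho> - p"
  define t' where "t' = y/\<rho> - p'"
  have t: "0 \<le> t" "t \<le> 1" "0 \<le> t'" "t' \<le> 1" unfolding t_def p_def t'_def p'_def by linarith+
  have xy': "x/\<rho> \<le> y/\<rho>" using xy r by (simp add: divide_right_mono)
  have pp: "p \<le> p'" unfolding p_def p'_def using xy' floor_mono by blast
  have f_le: "f b \<le> f a" if "a \<le> b" for a b
    using int_steps_lower_bound[where z = "\<lambda>q. - f q" and \<delta> = 0] dec that by simp
  have Ix: "interp \<rho> f x = (1 - t) * f p + t * f (p+1)" unfolding interp_eq_floor[OF r] t_def p_def by simp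
  have Iy: "interp \<rho> f y = (1 - t') * f p' + t' * f (p'+1)" unfolding interp_eq_floor[OF r] t'_def p'_def by simp
  show ?thesis
  proof (cases "p = p'")
    case True
    then have "(t' - t) * (f (p+1) - f p) \<le> 0"
      using xy' dec[of p] unfolding t_def t'_def by (simp add: mult_nonneg_nonpos)
    then show ?thesis unfolding Ix Iy using True by (simp add: algebra_simps)
  next
    case False
    then have "p + 1 \<le> p'" using pp by simp
    then have "(1 - t') * f p' + t' * f (p'+1) \<le> (1 - t') * f (p+1) + t' * f (p+1)"
      using t by (intro add_mono mult_left_mono f_le) auto
    moreover have "(1 - t) * f (p+1) \<le> (1 - t) * f p" using t dec[of p] by (intro mult_left_mono) auto
    ultimately show ?thesis unfolding Ix Iy by (simp add: algebra_simps)
  qed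
qed

lemma isCont_interp:
  assumes r: "\<rho> > 0"
  shows "isCont (interp \<rho> f) x"
proof -
  define S where "S = {\<lfloor>x/\<rho>\<rfloor> - 3..\<lfloor>x/\<rho>\<rfloor> + 3}"
  have "interp \<rho> f y = (\<Sum>q\<in>S. f q * hat \<rho> q y)" if "dist y x < \<rho>" for y
  proof (rule interp_eq_sum)
    fix q assume q: "q \<notin> S"
    have "\<bar>y/\<rho> - x/\<rho>\<bar> = \<bar>y - x\<bar>/\<rho>" using r by (simp add: diff_divide_distrib[symmetric])
    also have "\<dots> < 1" using that r by (simp add: dist_real_def)
    moreover have "real_of_int q \<le> \<lfloor>x/\<rho>\<rfloor> - 4 \<or> real_of_int q \<ge> \<lfloor>x/\<rho>\<rfloor> + 4"
      using q unfolding S_def by auto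
    ultimately have "\<bar>y/\<rho> - real_of_int q\<bar> \<ge> 1" by linarith
    then show "hat \<rho> q y = 0" using hat_eq_tent[OF r] by simp
  qed (simp add: S_def)
  then have "\<forall>\<^sub>F y in nhds x. interp \<rho> f y = (\<Sum>q\<in>S. f q * hat \<rho> q y)"
    unfolding eventually_nhds_metric using r by blast
  note isCont_cong[OF this]
  moreover have "isCont (\<lambda>y. \<Sum>q\<in>S. f q * hat \<rho> q y) x"
    unfolding hat_def using r by (intro continuous_intros) auto
  ultimately show ?thesis by simp
qed

lemma interp_second_diff_le:
  assumes r: "\<rho> > 0" and w: "\<And>q. w (q+1) + w (q-1) - 2 * w q \<le> K"
  shows "interp \<rho> w (y + \<rho>) + interp \<rho> w (y - \<rho>) - 2 * interp \<rho> w y \<le> K"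
proof -
  have "interp \<rho> w (y + \<rho>) = interp \<rho> (\<lambda>q. w (q+1)) y"
    and "interp \<rho> w (y - \<rho>) = interp \<rho> (\<lambda>q. w (q-1)) y"
    using interp_shift[OF r, of w y 1] interp_shift[OF r, of w y "-1"] by simp_all
  moreover have "interp \<rho> (\<lambda>q. w (q+1) + w (q-1) - 2 * w q) y \<le> K"
    by (rule interp_le[OF r w])
  ultimately show ?thesis
    using interp_linear[OF r, of 1 "\<lambda>q. w (q+1) + w (q-1)" "-2" w 0 y]
      interp_linear[OF r, of 1 "\<lambda>q. w (q+1)" 1 "\<lambda>q. w (q-1)" 0 y]
    by simp
qed

lemma interp_increment_le:
  assumes r: "\<rho> > 0" and w: "\<And>q. w (q+1) + w (q-1) - 2 * w q \<le> K * \<rho>^2" and s: "s \<ge> 0"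
  shows "interp \<rho> w (y + real m * \<rho> + s) - interp \<rho> w (y + s)
           - (interp \<rho> w (y + real m * \<rho>) - interp \<rho> w y) \<le> K * (real m * \<rho>) * s"
proof (induction m arbitrary: y)
  case (Suc m)
  \<comment> \<open>Up to the linear term \<open>K \<rho> x\<close>, the increment \<open>x \<mapsto> I[w](x + \<rho>) - I[w](x)\<close> is the
    interpolant of the nonincreasing grid function \<open>e\<close>.\<close>
  define e where "e q = w (q+1) - w q - K * \<rho>^2 * real_of_int q" for q
  have step: "interp \<rho> w (x + \<rho>) - interp \<rho> w x = interp \<rho> e x + K * \<rho> * x" for x
  proof -
    have "interp \<rho> w (x + \<rho>) = interp \<rho> (\<lambda>q. w (q+1)) x"
      using interp_shift[OF r, of w x 1] by simp
    moreover have "K * \<rho>^2 * (x/\<rho>) = K * \<rho> * x" using r by (simp add: power2_eq_square)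
    ultimately show ?thesis
      using interp_linear[OF r, of 1 "\<lambda>q. w (q+1)" "-1" w "- K * \<rho>^2" x]
      unfolding e_def by (simp add: algebra_simps)
  qed
  have "e (q+1) \<le> e q" for q
    using w[of "q+1"] unfolding e_def by (simp add: algebra_simps)
  then have "interp \<rho> e (y + s) \<le> interp \<rho> e y" using s by (intro interp_antimono[OF r]) auto
  then have "interp \<rho> w (y + \<rho> + s) - interp \<rho> w (y + s) - (interp \<rho> w (y + \<rho>) - interp \<rho> w y)
      \<le> K * \<rho> * s"
    using step[of y] step[of "y + s"] by (simp add: algebra_simps)
  moreover have "interp \<rho> w (y + \<rho> + real m * \<rho> + s) - interp \<rho> w (y + \<rho> + s)
      - (interp \<rho> w (y + \<rho> + real m * \<rho>) - interp \<rho> w (y + \<rho>)) \<le> K * (real m * \<rho>) * s"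
    by (rule Suc.IH)
  ultimately show ?case by (simp add: algebra_simps)
qed simp

section \<open>Second differences and derivatives\<close>

lemma second_difference_le:
  fixes f :: "real \<Rightarrow> real"
  assumes d1: "\<And>x. f differentiable at x" and d2: "\<And>x. deriv f differentiable at x"
    and bd: "\<And>x. deriv (deriv f) x \<le> C"
  shows "f (x + r) + f (x - r) - 2 * f x \<le> C * r^2"
proof -
  have D1: "DERIV f x :> deriv f x" for x using d1 DERIV_deriv_iff_real_differentiable by blast
  have D2: "DERIV (deriv f) x :> deriv (deriv f) x" for x using d2 DERIV_deriv_iff_real_differentiable by blast
  have deriv_incr: "deriv f b - deriv f a \<le> C * (b - a)" if ab: "a < b" for a b
  proof -
    obtain z where "deriv f b - deriv f a = (b - a) * deriv (deriv f) z"
      using MVT2[OF ab, of "deriv f" "deriv (deriv f)"] D2 by blast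
    moreover have "(b - a) * deriv (deriv f) z \<le> (b - a) * C"
      using bd[of z] ab by (intro mult_left_mono) auto
    ultimately show ?thesis by (simp add: algebra_simps)
  qed
  have pos: "f (x + r) + f (x - r) - 2 * f x \<le> C * r^2" if r: "r > 0" for r
  proof -
    define g where "g s = f (x + s) + f (x - s) - C * s^2" for s
    define g' where "g' s = deriv f (x + s) - deriv f (x - s) - 2 * C * s" for s
    have "DERIV g s :> g' s" for s
      unfolding g_def g'_def by (auto intro!: derivative_eq_intros DERIV_chain2[OF D1])
    then obtain z where z: "0 < z" "z < r" "g r - g 0 = (r - 0) * g' z"
      using MVT2[OF r, of g g'] by blast
    have "g' z \<le> 0" using deriv_incr[of "x - z" "x + z"] z unfolding g'_def by (simp add: algebra_simps)
    then have "g r - g 0 \<le> 0" using z r by (simp add: mult_nonneg_nonpos)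
    then show ?thesis unfolding g_def by (simp add: algebra_simps)
  qed
  consider "r > 0" | "r = 0" | "-r > 0" by linarith
  then show ?thesis
  proof cases
    case 3
    then show ?thesis using pos[of "-r"] by (simp add: algebra_simps)
  qed (use pos in auto)
qed

lemma deriv_diff_le_of_increments:
  fixes f :: "real \<Rightarrow> real"
  assumes "f differentiable at a" and "f differentiable at b"
    and le: "\<And>s. s > 0 \<Longrightarrow> f (b + s) - f b - (f (a + s) - f a) \<le> M * s"
  shows "deriv f b - deriv f a \<le> M"
proof -
  have "((\<lambda>s. (f (a + s) - f a) / s) \<longlongrightarrow> deriv f a) (at 0)"
    and "((\<lambda>s. (f (b + s) - f b) / s) \<longlongrightarrow> deriv f b) (at 0)"
    using assms(1,2) DERIV_deriv_iff_real_differentiable DERIV_def by blast+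
  then have "((\<lambda>s. (f (b + s) - f b) / s - (f (a + s) - f a) / s) \<longlongrightarrow> deriv f b - deriv f a) (at_right 0)"
    using filterlim_at_split tendsto_diff by blast
  moreover have "\<forall>\<^sub>F s in at_right 0. (f (b + s) - f b) / s - (f (a + s) - f a) / s \<le> M"
    using eventually_at_right_less[of "0::real"]
  proof (rule eventually_mono)
    fix s :: real assume s: "0 < s"
    have "(f (b + s) - f b) / s - (f (a + s) - f a) / s = (f (b + s) - f b - (f (a + s) - f a)) / s"
      by (simp add: diff_divide_distrib)
    also have "\<dots> \<le> M" using le[OF s] s by (simp add: divide_le_eq)
    finally show "(f (b + s) - f b) / s - (f (a + s) - f a) / s \<le> M" .
  qed
  ultimately show ?thesis by (rule tendsto_upperbound) simp
qed

section \<open>Discrete semiconcavity of the scheme\<close>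

definition bounded_semiconcave :: "real \<Rightarrow> (real \<Rightarrow> real measure \<Rightarrow> real) \<Rightarrow> bool" where
  "bounded_semiconcave C F \<longleftrightarrow> (\<forall>m. P1 m \<longrightarrow> (\<forall>x.
     \<bar>F x m\<bar> \<le> C \<and> (\<forall>r. F (x + r) m + F (x - r) m - 2 * F x m \<le> C * r^2)))"

lemma A1_coeff_imp_bounded_semiconcave:
  assumes "A1_coeff F"
  shows "\<exists>C\<ge>0. bounded_semiconcave C F"
proof -
  obtain C where C: "\<And>m x. P1 m \<Longrightarrow> \<bar>F x m\<bar> \<le> C \<and>
      (\<lambda>y. F y m) differentiable (at x) \<and> deriv (\<lambda>y. F y m) differentiable (at x) \<and>
      \<bar>deriv (deriv (\<lambda>y. F y m)) x\<bar> \<le> C"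
    using assms unfolding A1_coeff_def by blast
  have "F (x + r) m + F (x - r) m - 2 * F x m \<le> \<bar>C\<bar> * r^2" if "P1 m" for m x r
  proof (rule second_difference_le)
    show "deriv (deriv (\<lambda>y. F y m)) y \<le> \<bar>C\<bar>" for y
      using C[OF that, of y] by linarith
  qed (use C[OF that] in auto)
  moreover have "\<bar>F x m\<bar> \<le> \<bar>C\<bar>" if "P1 m" for m x
    using C[OF that, of x] by linarith
  ultimately show ?thesis unfolding bounded_semiconcave_def by (intro exI[of _ "\<bar>C\<bar>"]) auto
qed

lemma INF_second_difference_le:
  fixes f g k :: "'a \<Rightarrow> real"
  assumes "bdd_below (range f)" "bdd_below (range g)" "bdd_below (range k)"
    and le: "\<And>\<alpha>. f \<alpha> + g \<alpha> - 2 * k \<alpha> \<le> M"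
  shows "(INF \<alpha>. f \<alpha>) + (INF \<alpha>. g \<alpha>) - 2 * (INF \<alpha>. k \<alpha>) \<le> M"
proof (rule field_le_epsilon)
  fix d :: real assume "d > 0"
  then obtain \<alpha> where "k \<alpha> < (INF \<alpha>. k \<alpha>) + d/2"
    using cINF_less_iff[of UNIV k "(INF \<alpha>. k \<alpha>) + d/2"] assms(3) by auto
  moreover have "(INF \<alpha>. f \<alpha>) \<le> f \<alpha>" "(INF \<alpha>. g \<alpha>) \<le> g \<alpha>"
    using assms(1,2) by (auto intro: cINF_lower)
  ultimately show "(INF \<alpha>. f \<alpha>) + (INF \<alpha>. g \<alpha>) - 2 * (INF \<alpha>. k \<alpha>) \<le> M + d"
    using le[of \<alpha>] by linarith
qed

lemma scheme_step_bounds: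
  fixes w :: "int \<Rightarrow> real" and f :: "real \<Rightarrow> real" and S :: real
  assumes r: "\<rho> > 0" and h: "h > 0"
    and w_bd: "\<And>q. \<bar>w q\<bar> \<le> B" and w_sc: "\<And>q. w (q+1) + w (q-1) - 2 * w q \<le> B * \<rho>^2"
    and f_bd: "\<And>x. \<bar>f x\<bar> \<le> CF" and f_sc: "\<And>x. f (x + \<rho>) + f (x - \<rho>) - 2 * f x \<le> CF * \<rho>^2"
  defines "v \<equiv> \<lambda>i. INF \<alpha>. (interp \<rho> w (real_of_int i * \<rho> - h * \<alpha> + S)
                          + interp \<rho> w (real_of_int i * \<rho> - h * \<alpha> - S)) / 2
                        + h * \<alpha>\<^sup>2 / 2 + h * f (real_of_int i * \<rho>)"
  shows "\<bar>v i\<bar> \<le> B + h * CF" and "v (i+1) + v (i-1) - 2 * v i \<le> (B + h * CF) * \<rho>^2"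
proof -
  define W where "W = interp \<rho> w"
  define E where "E x \<alpha> = (W (x - h * \<alpha> + S) + W (x - h * \<alpha> - S)) / 2 + h * \<alpha>\<^sup>2 / 2 + h * f x"
    for x \<alpha>
  have v: "v i = (INF \<alpha>. E (real_of_int i * \<rho>) \<alpha>)" for i unfolding v_def E_def W_def ..
  have W_bd: "\<bar>W y\<bar> \<le> B" for y unfolding W_def by (rule interp_abs_le[OF r w_bd])
  have hf: "\<bar>h * f x\<bar> \<le> h * CF" for x using f_bd[of x] h by (simp add: abs_mult)
  have E_low: "- B - h * CF \<le> E x \<alpha>" for x \<alpha>
  proof -
    have "0 \<le> h * \<alpha>\<^sup>2 / 2" using h by simp
    then show ?thesis
      using W_bd[of "x - h * \<alpha> + S"] W_bd[of "x - h * \<alpha> - S"] hf[of x]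
      unfolding E_def abs_le_iff by (simp add: field_simps)
  qed
  have bdd: "bdd_below (range (E x))" for x using E_low by (intro bdd_belowI2) auto
  have "(INF \<alpha>. E x \<alpha>) \<le> E x 0" for x by (rule cINF_lower[OF bdd]) simp
  also have "E x 0 \<le> B + h * CF" for x
    using W_bd[of "x + S"] W_bd[of "x - S"] hf[of x] unfolding E_def by (simp add: abs_le_iff field_simps)
  finally have "(INF \<alpha>. E x \<alpha>) \<le> B + h * CF" for x .
  moreover have "- B - h * CF \<le> (INF \<alpha>. E x \<alpha>)" for x by (rule cINF_greatest) (use E_low in auto)
  ultimately show "\<bar>v i\<bar> \<le> B + h * CF"
    unfolding v using abs_le_iff by (smt (verit))
  have "E (x + \<rho>) \<alpha> + E (x - \<rho>) \<alpha> - 2 * E x \<alpha> \<le> (B + h * CF) * \<rho>^2" for x \<alpha>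
  proof -
    have "W (y + \<rho>) + W (y - \<rho>) - 2 * W y \<le> B * \<rho>^2" for y
      unfolding W_def by (rule interp_second_diff_le[OF r w_sc])
    from this[of "x - h * \<alpha> + S"] this[of "x - h * \<alpha> - S"]
    have "E (x + \<rho>) \<alpha> + E (x - \<rho>) \<alpha> - 2 * E x \<alpha>
        \<le> B * \<rho>^2 + h * (f (x + \<rho>) + f (x - \<rho>) - 2 * f x)"
      unfolding E_def by (simp add: field_simps)
    also have "\<dots> \<le> B * \<rho>^2 + h * (CF * \<rho>^2)" using f_sc[of x] h by simp
    finally show ?thesis by (simp add: algebra_simps)
  qed
  moreover have "real_of_int (i + 1) * \<rho> = real_of_int i * \<rho> + \<rho>"
    and "real_of_int (i - 1) * \<rho> = real_of_int i * \<rho> - \<rho>" by (simp_all add: algebra_simps)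
  ultimately show "v (i+1) + v (i-1) - 2 * v i \<le> (B + h * CF) * \<rho>^2"
    unfolding v by (simp add: INF_second_difference_le bdd)
qed

lemma vback_bounds:
  assumes r: "\<rho> > 0" and h: "h > 0" and P1_path: "\<And>t. t \<in> {0..real N * h} \<Longrightarrow> P1 (\<mu> t)"
    and F: "bounded_semiconcave CF F" and G: "bounded_semiconcave CG G"
  shows "\<bar>vback \<rho> h \<sigma> F G \<mu> N m i\<bar> \<le> CG + real m * h * CF \<and>
    vback \<rho> h \<sigma> F G \<mu> N m (i+1) + vback \<rho> h \<sigma> F G \<mu> N m (i-1) - 2 * vback \<rho> h \<sigma> F G \<mu> N m i
      \<le> (CG + real m * h * CF) * \<rho>^2"
proof (induction m arbitrary: i)
  case 0
  have "P1 (\<mu> (real N * h))" using P1_path h by simp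
  moreover have "real_of_int (i + 1) * \<rho> = real_of_int i * \<rho> + \<rho>"
    and "real_of_int (i - 1) * \<rho> = real_of_int i * \<rho> - \<rho>" by (simp_all add: algebra_simps)
  ultimately show ?case using G unfolding bounded_semiconcave_def by simp
next
  case (Suc m)
  define t where "t = real (N - Suc m) * h"
  have "t \<in> {0..real N * h}" unfolding t_def using h by (auto intro: mult_right_mono)
  then have "P1 (\<mu> t)" by (rule P1_path)
  then have "\<bar>F x (\<mu> t)\<bar> \<le> CF" "F (x + \<rho>) (\<mu> t) + F (x - \<rho>) (\<mu> t) - 2 * F x (\<mu> t) \<le> CF * \<rho>^2" for x
    using F unfolding bounded_semiconcave_def by auto
  note step = scheme_step_bounds[OF r h, where w = "vback \<rho> h \<sigma> F G \<mu> N m" and f = "\<lambda>x. F x (\<mu> t)",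
      OF conjunct1[OF Suc.IH] conjunct2[OF Suc.IH] this]
  have B: "CG + real (Suc m) * h * CF = (CG + real m * h * CF) + h * CF" by (simp add: algebra_simps)
  show ?case unfolding B using step[of _ "sqrt h * \<sigma> t"] by (simp add: Let_def t_def)
qed

lemma vgrid_second_diff_le:
  assumes r: "\<rho> > 0" and h: "h > 0" and P1_path: "\<And>t. t \<in> {0..real N * h} \<Longrightarrow> P1 (\<mu> t)"
    and F: "bounded_semiconcave CF F" and G: "bounded_semiconcave CG G"
    and CF: "CF \<ge> 0" and K: "CG + real N * h * CF \<le> K"
  shows "vgrid \<rho> h \<sigma> F G \<mu> N k (q+1) + vgrid \<rho> h \<sigma> F G \<mu> N k (q-1) - 2 * vgrid \<rho> h \<sigma> F G \<mu> N k q
    \<le> K * \<rho>^2"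
proof -
  have "CG + real (N - k) * h * CF \<le> CG + real N * h * CF"
    using h CF by (intro add_left_mono mult_right_mono) auto
  then have "(CG + real (N - k) * h * CF) * \<rho>^2 \<le> K * \<rho>^2" using K by (intro mult_right_mono) auto
  moreover have "vback \<rho> h \<sigma> F G \<mu> N (N - k) (q+1) + vback \<rho> h \<sigma> F G \<mu> N (N - k) (q-1)
      - 2 * vback \<rho> h \<sigma> F G \<mu> N (N - k) q \<le> (CG + real (N - k) * h * CF) * \<rho>^2"
    using vback_bounds[OF r h _ F G] P1_path by blast
  ultimately show ?thesis unfolding vgrid_def by linarith
qed

section \<open>Mollification\<close>

lemma integrable_lborel_vanishing_outside:
  fixes H :: "real \<Rightarrow> real"
  assumes "\<And>y. isCont H y" and "\<And>y. y \<notin> {a..b} \<Longrightarrow> H y = 0"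
  shows "integrable lborel H"
proof -
  have "integrable lborel (\<lambda>x. H x * indicator {a..b} x)"
    by (rule borel_integrable_atLeastAtMost) (use assms in auto)
  also have "(\<lambda>x. H x * indicator {a..b} x) = H"
    using assms(2) by (auto simp: fun_eq_iff indicator_def)
  finally show ?thesis .
qed

lemma has_integral_lborel_vanishing_outside:
  fixes H :: "real \<Rightarrow> real"
  assumes "\<And>y. isCont H y" and "\<And>y. y \<notin> {a..b} \<Longrightarrow> H y = 0"
  shows "(H has_integral (\<integral>y. H y \<partial>lborel)) {a..b}"
proof -
  have "(H has_integral (\<integral>y. H y \<partial>lborel)) UNIV"
    by (rule has_integral_integral_lborel[OF integrable_lborel_vanishing_outside[OF assms]]) auto
  moreover have "H = (\<lambda>x. if x \<in> {a..b} then H x else 0)" using assms(2) by auto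
  ultimately show ?thesis using has_integral_restrict_UNIV[of "{a..b}" H] by metis
qed

lemma mollifierD:
  assumes "mollifier \<phi>"
  shows "\<exists>R. \<forall>u. \<bar>u\<bar> > R \<longrightarrow> \<phi> u = 0"
    and "\<And>u. DERIV \<phi> u :> deriv \<phi> u"
    and "\<And>u. isCont (deriv \<phi>) u"
    and "\<And>u. \<phi> u \<ge> 0"
    and "integral\<^sup>L lborel \<phi> = 1"
proof -
  show "\<exists>R. \<forall>u. \<bar>u\<bar> > R \<longrightarrow> \<phi> u = 0" using assms unfolding mollifier_def by blast
  have "\<phi> differentiable at u" for u using assms unfolding mollifier_def by (metis funpow_0)
  then show "DERIV \<phi> u :> deriv \<phi> u" for u using DERIV_deriv_iff_real_differentiable by blast
  have "deriv \<phi> differentiable at u" for u using assms unfolding mollifier_def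
    by (metis funpow_0 funpow_Suc_right o_apply One_nat_def)
  then show "isCont (deriv \<phi>) u" for u using DERIV_deriv_iff_real_differentiable DERIV_isCont by blast
  show "\<phi> u \<ge> 0" for u using assms unfolding mollifier_def by blast
  show "integral\<^sup>L lborel \<phi> = 1" using assms unfolding mollifier_def by blast
qed

lemma phi_eps_props:
  assumes m: "mollifier \<phi>" and e: "\<epsilon> > 0"
  obtains R where "\<And>u. \<bar>u\<bar> > R \<Longrightarrow> phi_eps \<phi> \<epsilon> u = 0"
    "\<And>u. DERIV (phi_eps \<phi> \<epsilon>) u :> deriv \<phi> (u/\<epsilon>) / \<epsilon> / \<epsilon>"
    "\<And>u. isCont (\<lambda>u. deriv \<phi> (u/\<epsilon>) / \<epsilon> / \<epsilon>) u"
    "\<And>u. phi_eps \<phi> \<epsilon> u \<ge> 0"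
    "integral\<^sup>L lborel (phi_eps \<phi> \<epsilon>) = 1"
proof -
  obtain R where R: "\<And>u. \<bar>u\<bar> > R \<Longrightarrow> \<phi> u = 0" using mollifierD(1)[OF m] by blast
  show ?thesis
  proof
    show "phi_eps \<phi> \<epsilon> u = 0" if "\<bar>u\<bar> > R * \<epsilon>" for u
      using that e R[of "u/\<epsilon>"] unfolding phi_eps_def by (simp add: field_simps)
    have "DERIV (\<lambda>u. \<phi> (u/\<epsilon>)) u :> deriv \<phi> (u/\<epsilon>) * (1/\<epsilon>)" for u
      using e by (intro DERIV_chain2[OF mollifierD(2)[OF m]]) (auto intro!: derivative_eq_intros)
    from DERIV_cdivide[OF this, of \<epsilon>]
    show "DERIV (phi_eps \<phi> \<epsilon>) u :> deriv \<phi> (u/\<epsilon>) / \<epsilon> / \<epsilon>" for u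
      unfolding phi_eps_def by simp
    show "isCont (\<lambda>u. deriv \<phi> (u/\<epsilon>) / \<epsilon> / \<epsilon>) u" for u
      using e by (intro isCont_divide continuous_const isCont_o2[OF _ mollifierD(3)[OF m]] continuous_intros) auto
    show "phi_eps \<phi> \<epsilon> u \<ge> 0" for u unfolding phi_eps_def using mollifierD(4)[OF m] e by simp
    have "(\<integral>z. \<phi> (z/\<epsilon>) \<partial>lborel) = \<bar>\<epsilon>\<bar> *\<^sub>R (\<integral>z. \<phi> ((0 + \<epsilon> * z)/\<epsilon>) \<partial>lborel)"
      by (rule lborel_integral_real_affine) (use e in simp)
    also have "(\<lambda>z. \<phi> ((0 + \<epsilon> * z)/\<epsilon>)) = \<phi>" using e by (simp add: fun_eq_iff)
    finally show "integral\<^sup>L lborel (phi_eps \<phi> \<epsilon>) = 1"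
      using mollifierD(5)[OF m] e unfolding phi_eps_def by simp
  qed
qed

definition mollify :: "(real \<Rightarrow> real) \<Rightarrow> real \<Rightarrow> (real \<Rightarrow> real) \<Rightarrow> real \<Rightarrow> real" where
  "mollify \<phi> \<epsilon> g x = (\<integral>y. phi_eps \<phi> \<epsilon> (x - y) * g y \<partial>lborel)"

lemma mollify_eq_shifted:
  "mollify \<phi> \<epsilon> g x = (\<integral>z. phi_eps \<phi> \<epsilon> z * g (x - z) \<partial>lborel)"
proof -
  have "mollify \<phi> \<epsilon> g x
      = \<bar>-1\<bar> *\<^sub>R (\<integral>z. phi_eps \<phi> \<epsilon> (x - (x + (-1) * z)) * g (x + (-1) * z) \<partial>lborel)"
    unfolding mollify_def by (rule lborel_integral_real_affine) simp
  then show ?thesis by simp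
qed

text \<open>The derivative falls on the kernel, so only continuity of \<open>g\<close> is needed
  (Leibniz rule on an interval containing the support for all \<open>x\<close> near \<open>x\<^sub>0\<close>).\<close>
lemma mollify_differentiable:
  assumes m: "mollifier \<phi>" and e: "\<epsilon> > 0" and g: "\<And>y. isCont g y"
  shows "mollify \<phi> \<epsilon> g differentiable at x\<^sub>0"
proof -
  obtain R where R: "\<And>u. \<bar>u\<bar> > R \<Longrightarrow> phi_eps \<phi> \<epsilon> u = 0"
    "\<And>u. DERIV (phi_eps \<phi> \<epsilon>) u :> deriv \<phi> (u/\<epsilon>) / \<epsilon> / \<epsilon>"
    "\<And>u. isCont (\<lambda>u. deriv \<phi> (u/\<epsilon>) / \<epsilon> / \<epsilon>) u"
    using phi_eps_props[OF m e] by metis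
  define \<psi> where "\<psi> = phi_eps \<phi> \<epsilon>"
  define \<psi>' where "\<psi>' u = deriv \<phi> (u/\<epsilon>) / \<epsilon> / \<epsilon>" for u
  define A where "A = x\<^sub>0 - R - 1"
  define B where "B = x\<^sub>0 + R + 1"
  define U where "U = ball x\<^sub>0 (1::real)"
  have D\<psi>: "DERIV \<psi> u :> \<psi>' u" for u unfolding \<psi>_def \<psi>'_def by (rule R(2))
  have "isCont \<psi> u" for u using D\<psi> DERIV_isCont by blast
  then have "isCont (\<lambda>y. \<psi> (x - y)) y" for x y by (intro isCont_o2[OF _ \<open>isCont \<psi> _\<close>] continuous_intros)
  then have cont: "isCont (\<lambda>y. \<psi> (x - y) * g y) y" for x y using g by (intro continuous_intros)
  have eq: "integral {A..B} (\<lambda>y. \<psi> (x - y) * g y) = mollify \<phi> \<epsilon> g x" if "x \<in> U" for x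
  proof -
    have "\<psi> (x - y) * g y = 0" if "y \<notin> {A..B}" for y
      using \<open>x \<in> U\<close> that R(1)[of "x - y"] unfolding U_def A_def B_def \<psi>_def
      by (auto simp: dist_real_def)
    then show ?thesis unfolding mollify_def \<psi>_def[symmetric]
      by (intro integral_unique has_integral_lborel_vanishing_outside cont)
  qed
  have "((\<lambda>x. integral (cbox A B) (\<lambda>t. \<psi> (x - t) * g t)) has_field_derivative
      integral (cbox A B) (\<lambda>t. \<psi>' (x\<^sub>0 - t) * g t)) (at x\<^sub>0 within U)"
  proof (rule leibniz_rule_field_derivative[where fx = "\<lambda>x t. \<psi>' (x - t) * g t"])
    fix x t :: real
    have "DERIV (\<lambda>x. \<psi> (x - t)) x :> \<psi>' (x - t) * 1"
      by (rule DERIV_chain2[OF D\<psi>]) (auto intro!: derivative_eq_intros)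
    from DERIV_cmult_right[OF this, of "g t"]
    show "((\<lambda>x. \<psi> (x - t) * g t) has_field_derivative \<psi>' (x - t) * g t) (at x within U)"
      by (simp add: has_field_derivative_at_within)
  next
    show "(\<lambda>t. \<psi> (x - t) * g t) integrable_on cbox A B" for x
      unfolding cbox_interval
      by (rule integrable_continuous_interval, rule continuous_at_imp_continuous_on) (use cont in auto)
  next
    have "continuous_on UNIV \<psi>'"
      unfolding \<psi>'_def by (rule continuous_at_imp_continuous_on) (use R(3) in blast)
    moreover have "continuous_on UNIV g" by (rule continuous_at_imp_continuous_on) (use g in blast)
    ultimately have "continuous_on UNIV (\<lambda>p::real \<times> real. \<psi>' (fst p - snd p) * g (snd p))"
      by (intro continuous_on_mult continuous_on_compose2[OF \<open>continuous_on UNIV \<psi>'\<close>]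
          continuous_on_compose2[OF \<open>continuous_on UNIV g\<close>] continuous_intros) auto
    then show "continuous_on (U \<times> cbox A B) (\<lambda>(x, t). \<psi>' (x - t) * g t)"
      by (rule continuous_on_subset[THEN continuous_on_eq]) auto
  qed (auto simp: U_def)
  then have "((\<lambda>x. integral (cbox A B) (\<lambda>t. \<psi> (x - t) * g t)) has_field_derivative
      integral (cbox A B) (\<lambda>t. \<psi>' (x\<^sub>0 - t) * g t)) (at x\<^sub>0)"
    using at_within_open[of x\<^sub>0 U] unfolding U_def by simp
  then have "(mollify \<phi> \<epsilon> g has_field_derivative integral (cbox A B) (\<lambda>t. \<psi>' (x\<^sub>0 - t) * g t)) (at x\<^sub>0)"
    by (rule has_field_derivative_transform_within_open[of _ _ _ U]) (use eq in \<open>auto simp: U_def cbox_interval\<close>)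
  then show ?thesis unfolding real_differentiable_def by blast
qed

lemma mollify_increment_le:
  assumes m: "mollifier \<phi>" and e: "\<epsilon> > 0" and g: "\<And>y. isCont g y"
    and le: "\<And>y. g (y + L + s) - g (y + s) - (g (y + L) - g y) \<le> M"
  shows "mollify \<phi> \<epsilon> g (a + L + s) - mollify \<phi> \<epsilon> g (a + s)
           - (mollify \<phi> \<epsilon> g (a + L) - mollify \<phi> \<epsilon> g a) \<le> M"
proof -
  obtain R where R: "\<And>u. \<bar>u\<bar> > R \<Longrightarrow> phi_eps \<phi> \<epsilon> u = 0"
      "\<And>u. DERIV (phi_eps \<phi> \<epsilon>) u :> deriv \<phi> (u/\<epsilon>) / \<epsilon> / \<epsilon>"
      "\<And>u. phi_eps \<phi> \<epsilon> u \<ge> 0" "integral\<^sup>L lborel (phi_eps \<phi> \<epsilon>) = 1"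
    using phi_eps_props[OF m e] by metis
  define \<psi> where "\<psi> = phi_eps \<phi> \<epsilon>"
  have "isCont \<psi> u" for u unfolding \<psi>_def using R(2) DERIV_isCont by blast
  then have int: "integrable lborel (\<lambda>z. \<psi> z * k z)" if "\<And>y. isCont k y" for k
    using that R(1) unfolding \<psi>_def[symmetric]
    by (intro integrable_lborel_vanishing_outside[of _ "-R" R] continuous_intros) auto
  have "isCont (\<lambda>z. g (c - z)) y" for c y by (intro isCont_o2[OF _ g] continuous_intros)
  note int_g = int[OF this]
  have "mollify \<phi> \<epsilon> g (a + L + s) - mollify \<phi> \<epsilon> g (a + s) - (mollify \<phi> \<epsilon> g (a + L) - mollify \<phi> \<epsilon> g a)
      = (\<integral>z. (\<psi> z * g (a + L + s - z) - \<psi> z * g (a + s - z)) - (\<psi> z * g (a + L - z) - \<psi> z * g (a - z)) \<partial>lborel)"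
    unfolding mollify_eq_shifted \<psi>_def[symmetric] using int_g by simp
  also have "\<dots> \<le> (\<integral>z. \<psi> z * M \<partial>lborel)"
  proof (rule integral_mono)
    show "integrable lborel (\<lambda>z. (\<psi> z * g (a + L + s - z) - \<psi> z * g (a + s - z))
        - (\<psi> z * g (a + L - z) - \<psi> z * g (a - z)))"
      by (intro Bochner_Integration.integrable_diff int_g)
    show "integrable lborel (\<lambda>z. \<psi> z * M)" by (rule int) simp
    show "(\<psi> z * g (a + L + s - z) - \<psi> z * g (a + s - z)) - (\<psi> z * g (a + L - z) - \<psi> z * g (a - z))
        \<le> \<psi> z * M" for z
      using mult_left_mono[OF le[of "a - z"] R(3)[of z]] unfolding \<psi>_def by (simp add: algebra_simps)
  qed
  also have "\<dots> = M" using R(4) unfolding \<psi>_def by simp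
  finally show ?thesis .
qed

section \<open>Hat functions at separated points\<close>

lemma tent_sum_three_le:
  fixes u v w :: real
  assumes "v - u \<ge> \<delta>" "w - v \<ge> \<delta>" "\<delta> \<le> 1"
  shows "max 0 (1 - \<bar>u\<bar>) + max 0 (1 - \<bar>v\<bar>) + max 0 (1 - \<bar>w\<bar>) \<le> 1 + 2 * (1 - \<delta>)"
  using assms by (simp split: abs_split split_max)

lemma tent_support_three:
  fixes z :: "int \<Rightarrow> real"
  assumes step: "\<And>j. z (j+1) - z j \<ge> \<delta>" and \<delta>: "\<delta> > 2/3"
  obtains a where "\<And>j. j \<notin> {a, a+1, a+2} \<Longrightarrow> \<bar>z j\<bar> \<ge> 1"
proof (cases "\<exists>j. \<bar>z j\<bar> < 1")
  case True
  define J where "J = {j. \<bar>z j\<bar> < 1}"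
  have close: "q - p \<le> 2" if "p \<in> J" "q \<in> J" "p \<le> q" for p q
  proof (rule ccontr)
    assume "\<not> q - p \<le> 2"
    then have "real_of_int (q - p) * \<delta> \<ge> 3 * \<delta>" using \<delta> by (intro mult_right_mono) auto
    moreover have "z q - z p < 2" using that unfolding J_def by (simp add: abs_less_iff)
    ultimately show False
      using int_steps_lower_bound[where z = z and \<delta> = \<delta>, OF step \<open>p \<le> q\<close>] \<delta> by linarith
  qed
  obtain j0 where "j0 \<in> J" using True unfolding J_def by blast
  then have "J \<subseteq> {j0 - 2..j0 + 2}" using close by (force simp: subset_iff)
  then have fin: "finite J" by (rule finite_subset) simp
  define a where "a = Min J"
  have "a \<in> J" "\<And>j. j \<in> J \<Longrightarrow> a \<le> j"
    using fin \<open>j0 \<in> J\<close> unfolding a_def by (auto intro: Min_in)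
  have sub: "J \<subseteq> {a, a+1, a+2}"
  proof
    fix j assume "j \<in> J"
    then have "a \<le> j" "j - a \<le> 2" using close \<open>a \<in> J\<close> \<open>\<And>j. j \<in> J \<Longrightarrow> a \<le> j\<close> by auto
    then show "j \<in> {a, a+1, a+2}" by auto
  qed
  show ?thesis
  proof (rule that)
    fix j assume "j \<notin> {a, a+1, a+2}"
    then have "j \<notin> J" using sub by blast
    then show "\<bar>z j\<bar> \<ge> 1" unfolding J_def by simp
  qed
next
  case False
  then show ?thesis by (intro that[of 0]) (simp add: not_less)
qed

lemma tent_sum_le:
  fixes z :: "int \<Rightarrow> real"
  assumes step: "\<And>j. z (j+1) - z j \<ge> \<delta>" and \<delta>: "3/4 \<le> \<delta>" "\<delta> \<le> 1"
  shows "(\<lambda>j. max 0 (1 - \<bar>z j\<bar>)) summable_on UNIV"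
    and "infsum (\<lambda>j. max 0 (1 - \<bar>z j\<bar>)) UNIV \<le> 1 + 2 * (1 - \<delta>)"
proof -
  obtain a where a: "\<And>j. j \<notin> {a, a+1, a+2} \<Longrightarrow> \<bar>z j\<bar> \<ge> 1"
    using tent_support_three[where z = z and \<delta> = \<delta>, OF step] \<delta> by auto
  have zero: "max 0 (1 - \<bar>z j\<bar>) = 0" if "j \<notin> {a, a+1, a+2}" for j
    using a[OF that] by simp
  have "(\<lambda>j. max 0 (1 - \<bar>z j\<bar>)) summable_on {a, a+1, a+2}" by simp
  then show "(\<lambda>j. max 0 (1 - \<bar>z j\<bar>)) summable_on UNIV"
    by (rule summable_on_cong_neutral[THEN iffD1, rotated 3]) (use zero in auto)
  have "infsum (\<lambda>j. max 0 (1 - \<bar>z j\<bar>)) UNIV = infsum (\<lambda>j. max 0 (1 - \<bar>z j\<bar>)) {a, a+1, a+2}"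
    by (rule infsum_cong_neutral) (use zero in auto)
  also have "\<dots> = max 0 (1 - \<bar>z a\<bar>) + max 0 (1 - \<bar>z (a+1)\<bar>) + max 0 (1 - \<bar>z (a+2)\<bar>)" by simp
  also have "\<dots> \<le> 1 + 2 * (1 - \<delta>)"
    using step[of a] step[of "a+1"] \<delta> by (intro tent_sum_three_le) (auto simp: add.assoc)
  finally show "infsum (\<lambda>j. max 0 (1 - \<bar>z j\<bar>)) UNIV \<le> 1 + 2 * (1 - \<delta>)" .
qed

lemma hat_sum_le_of_separated:
  fixes P :: "int \<Rightarrow> real"
  assumes r: "\<rho> > 0" and a: "0 \<le> a" "a \<le> 1/4"
    and sep: "\<And>j. (1 - a) * \<rho> \<le> P (j+1) - P j"
  shows "(\<lambda>j. hat \<rho> i (P j)) summable_on UNIV"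
    and "infsum (\<lambda>j. hat \<rho> i (P j)) UNIV \<le> 1 + 2 * a"
proof -
  define z where "z j = P j / \<rho> - real_of_int i" for j
  have hat_z: "(\<lambda>j. hat \<rho> i (P j)) = (\<lambda>j. max 0 (1 - \<bar>z j\<bar>))"
    unfolding z_def using hat_eq_tent[OF r] by auto
  have "1 - a \<le> z (j+1) - z j" for j
    using sep[of j] r unfolding z_def by (simp add: diff_divide_distrib[symmetric] le_divide_eq)
  from tent_sum_le[of "1 - a" z, OF this] a
  show "(\<lambda>j. hat \<rho> i (P j)) summable_on UNIV" "infsum (\<lambda>j. hat \<rho> i (P j)) UNIV \<le> 1 + 2 * a"
    unfolding hat_z by auto
qed

lemma sq_ge_of_separated:
  fixes P :: "int \<Rightarrow> real"
  assumes r: "\<rho> > 0" and a: "0 \<le> a" "a \<le> 1"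
    and sep: "\<And>i j. j \<le> i \<Longrightarrow> (1 - a) * (real_of_int i * \<rho> - real_of_int j * \<rho>) \<le> P i - P j"
  shows "(1 - 2 * a) * \<bar>real_of_int i * \<rho> - real_of_int j * \<rho>\<bar>\<^sup>2 \<le> \<bar>P i - P j\<bar>\<^sup>2"
proof -
  define D where "D = \<bar>real_of_int i * \<rho> - real_of_int j * \<rho>\<bar>"
  have "(1 - a) * D \<le> \<bar>P i - P j\<bar>"
  proof (cases "j \<le> i")
    case True
    then show ?thesis using sep[OF True] r unfolding D_def by (simp add: abs_of_nonneg)
  next
    case False
    then have "i \<le> j" by simp
    then have "(1 - a) * (real_of_int j * \<rho> - real_of_int i * \<rho>) \<le> P j - P i" by (rule sep)
    moreover have "D = real_of_int j * \<rho> - real_of_int i * \<rho>"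
      using \<open>i \<le> j\<close> r unfolding D_def by (simp add: abs_of_nonpos mult_right_mono)
    moreover have "P j - P i \<le> \<bar>P i - P j\<bar>" by simp
    ultimately show ?thesis by (metis order_trans)
  qed
  then have "((1 - a) * D)\<^sup>2 \<le> \<bar>P i - P j\<bar>\<^sup>2" using a by (intro power_mono) (auto simp: D_def)
  moreover have "((1 - a) * D)\<^sup>2 = (1 - 2 * a) * D\<^sup>2 + a\<^sup>2 * D\<^sup>2" by (simp add: power2_eq_square algebra_simps)
  ultimately show ?thesis unfolding D_def by (smt (verit) zero_le_power2 mult_nonneg_nonneg)
qed

section \<open>The characteristics\<close>

lemma veps_eq_mollify:
  "(\<lambda>x. veps \<phi> \<epsilon> \<rho> h \<sigma> F G \<mu> N x (real k * h))
     = mollify \<phi> \<epsilon> (interp \<rho> (vgrid \<rho> h \<sigma> F G \<mu> N (nat \<lfloor>real k * h / h\<rfloor>)))"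
  unfolding veps_def vrh_def mollify_def ..

lemma Phi_increment_ge:
  assumes m: "mollifier \<phi>" and e: "\<epsilon> > 0" and r: "\<rho> > 0" and h: "h > 0"
    and sc: "\<And>q. vgrid \<rho> h \<sigma> F G \<mu> N k (q+1) + vgrid \<rho> h \<sigma> F G \<mu> N k (q-1)
                   - 2 * vgrid \<rho> h \<sigma> F G \<mu> N k q \<le> K * \<rho>^2"
    and ji: "j \<le> i"
  shows "(1 - h * K) * (real_of_int i * \<rho> - real_of_int j * \<rho>)
    \<le> Phi s \<phi> \<epsilon> \<rho> h \<sigma> F G \<mu> N i k - Phi s \<phi> \<epsilon> \<rho> h \<sigma> F G \<mu> N j k"
proof -
  define g where "g = interp \<rho> (vgrid \<rho> h \<sigma> F G \<mu> N k)"
  define f where "f = mollify \<phi> \<epsilon> g"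
  define L where "L = real (nat (i - j)) * \<rho>"
  have xi: "real_of_int i * \<rho> = real_of_int j * \<rho> + L" unfolding L_def using ji by (simp add: algebra_simps)
  have g: "isCont g y" for y unfolding g_def by (rule isCont_interp[OF r])
  have "deriv f (real_of_int i * \<rho>) - deriv f (real_of_int j * \<rho>) \<le> K * L"
  proof (rule deriv_diff_le_of_increments)
    show "f differentiable at (real_of_int j * \<rho>)" "f differentiable at (real_of_int i * \<rho>)"
      unfolding f_def by (rule mollify_differentiable[OF m e g])+
    fix s :: real assume "s > 0"
    then have "g (y + L + s) - g (y + s) - (g (y + L) - g y) \<le> K * L * s" for y
      unfolding g_def L_def by (intro interp_increment_le[OF r sc]) simp
    then show "f (real_of_int i * \<rho> + s) - f (real_of_int i * \<rho>)
        - (f (real_of_int j * \<rho> + s) - f (real_of_int j * \<rho>)) \<le> K * L * s"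
      unfolding f_def xi using mollify_increment_le[OF m e g] by (simp add: algebra_simps)
  qed
  then have "h * (deriv f (real_of_int i * \<rho>) - deriv f (real_of_int j * \<rho>)) \<le> h * K * L"
    using h by (simp add: mult_left_mono mult.assoc)
  moreover have "(\<lambda>x. veps \<phi> \<epsilon> \<rho> h \<sigma> F G \<mu> N x (real k * h)) = f"
    unfolding veps_eq_mollify f_def g_def using h by simp
  ultimately show ?thesis unfolding Phi_def xi by (simp add: algebra_simps)
qed

lemma Phi_estimates:
  assumes m: "mollifier \<phi>" and r: "\<rho> > 0" and h: "h > 0" and e: "\<epsilon> > 0"
    and \<mu>: "cont_P1_path T \<mu>" and T: "T = real N * h"
    and F: "bounded_semiconcave CF F" "CF \<ge> 0" and G: "bounded_semiconcave CG G"
    and K: "CG + T * CF \<le> K" "0 \<le> h * K" "h * K \<le> 1/4"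
  shows "(1 - 2 * K * h) * \<bar>real_of_int i * \<rho> - real_of_int j * \<rho>\<bar>\<^sup>2
      \<le> min (\<bar>Phi 1 \<phi> \<epsilon> \<rho> h \<sigma> F G \<mu> N i k - Phi 1 \<phi> \<epsilon> \<rho> h \<sigma> F G \<mu> N j k\<bar>\<^sup>2)
            (\<bar>Phi (-1) \<phi> \<epsilon> \<rho> h \<sigma> F G \<mu> N i k - Phi (-1) \<phi> \<epsilon> \<rho> h \<sigma> F G \<mu> N j k\<bar>\<^sup>2)"
      (is "_ \<le> ?min")
    and "(\<lambda>j. hat \<rho> i (Phi 1 \<phi> \<epsilon> \<rho> h \<sigma> F G \<mu> N j k) + hat \<rho> i (Phi (-1) \<phi> \<epsilon> \<rho> h \<sigma> F G \<mu> N j k))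
      summable_on UNIV" (is "?hats summable_on _")
    and "infsum (\<lambda>j. hat \<rho> i (Phi 1 \<phi> \<epsilon> \<rho> h \<sigma> F G \<mu> N j k)
        + hat \<rho> i (Phi (-1) \<phi> \<epsilon> \<rho> h \<sigma> F G \<mu> N j k)) UNIV / 2 \<le> 1 + 2 * K * h"
proof -
  have "\<And>t. t \<in> {0..real N * h} \<Longrightarrow> P1 (\<mu> t)" using \<mu> T unfolding cont_P1_path_def by auto
  note sc = vgrid_second_diff_le[OF r h this F(1) G F(2) K(1)[unfolded T]]
  have sep: "(1 - h * K) * (real_of_int i * \<rho> - real_of_int j * \<rho>)
      \<le> Phi s \<phi> \<epsilon> \<rho> h \<sigma> F G \<mu> N i k - Phi s \<phi> \<epsilon> \<rho> h \<sigma> F G \<mu> N j k" if "j \<le> i" for s i j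
    by (intro Phi_increment_ge[OF m e r h _ that] sc)
  have step: "(1 - h * K) * \<rho> \<le> Phi s \<phi> \<epsilon> \<rho> h \<sigma> F G \<mu> N (j+1) k - Phi s \<phi> \<epsilon> \<rho> h \<sigma> F G \<mu> N j k"
    for s j using sep[of j "j+1"] by (simp add: algebra_simps)
  have "2 * K * h = 2 * (h * K)" by simp
  note sq = sq_ge_of_separated[OF r K(2), unfolded this[symmetric]]
  show "(1 - 2 * K * h) * \<bar>real_of_int i * \<rho> - real_of_int j * \<rho>\<bar>\<^sup>2 \<le> ?min"
    using sq[of "\<lambda>q. Phi 1 \<phi> \<epsilon> \<rho> h \<sigma> F G \<mu> N q k"] sq[of "\<lambda>q. Phi (-1) \<phi> \<epsilon> \<rho> h \<sigma> F G \<mu> N q k"] K sep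
    by simp
  note plus = hat_sum_le_of_separated[where P = "\<lambda>q. Phi 1 \<phi> \<epsilon> \<rho> h \<sigma> F G \<mu> N q k" and i = i,
      OF r K(2,3) step]
    and minus = hat_sum_le_of_separated[where P = "\<lambda>q. Phi (-1) \<phi> \<epsilon> \<rho> h \<sigma> F G \<mu> N q k" and i = i,
      OF r K(2,3) step]
  show "?hats summable_on UNIV" by (intro summable_on_add plus(1) minus(1))
  show "infsum ?hats UNIV / 2 \<le> 1 + 2 * K * h"
    using plus minus by (simp add: infsum_add mult.commute)
qed

theorem lemma4p6:
  fixes T :: real and F G :: "real \<Rightarrow> real measure \<Rightarrow> real" and \<sigma> :: "real \<Rightarrow> real"
    and m0 :: "real measure" and \<phi> :: "real \<Rightarrow> real"
    and \<rho>s hs \<epsilon>s :: "nat \<Rightarrow> real" and Ns :: "nat \<Rightarrow> nat"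
  assumes T_pos: "T > 0"
    and F_A1: "A1_coeff F" and G_A1: "A1_coeff G"
    and \<sigma>_cont: "continuous_on {0..T} \<sigma>"
    and m0_A1: "\<exists>f0::real\<Rightarrow>real. f0 \<in> borel_measurable lborel \<and> (\<forall>x. f0 x \<ge> 0) \<and>
                  (\<exists>B. \<forall>x. f0 x \<le> B) \<and> (\<exists>R. \<forall>x. \<bar>x\<bar> > R \<longrightarrow> f0 x = 0) \<and>
                  m0 = density lborel (\<lambda>x. ennreal (f0 x)) \<and> prob_space m0"
    and \<phi>_moll: "mollifier \<phi>"
    and pos: "\<And>n. \<rho>s n > 0 \<and> hs n > 0 \<and> \<epsilon>s n > 0"
    and lim: "\<rho>s \<longlonglongrightarrow> 0" "hs \<longlonglongrightarrow> 0" "\<epsilon>s \<longlonglongrightarrow> 0"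
    and Ns_def: "\<And>n. T = real (Ns n) * hs n"
  shows "\<exists>c>0. \<exists>n0. \<forall>n\<ge>n0. \<forall>\<mu>. cont_P1_path T \<mu> \<longrightarrow>
     (\<forall>i j::int. \<forall>k<Ns n.
        min (\<bar>Phi 1 \<phi> (\<epsilon>s n) (\<rho>s n) (hs n) \<sigma> F G \<mu> (Ns n) i k
              - Phi 1 \<phi> (\<epsilon>s n) (\<rho>s n) (hs n) \<sigma> F G \<mu> (Ns n) j k\<bar>\<^sup>2)
            (\<bar>Phi (-1) \<phi> (\<epsilon>s n) (\<rho>s n) (hs n) \<sigma> F G \<mu> (Ns n) i k
              - Phi (-1) \<phi> (\<epsilon>s n) (\<rho>s n) (hs n) \<sigma> F G \<mu> (Ns n) j k\<bar>\<^sup>2)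
        \<ge> (1 - c * hs n) * \<bar>real_of_int i * \<rho>s n - real_of_int j * \<rho>s n\<bar>\<^sup>2) \<and>
     (\<forall>i::int. \<forall>k<Ns n.
        (\<lambda>j. hat (\<rho>s n) i (Phi 1 \<phi> (\<epsilon>s n) (\<rho>s n) (hs n) \<sigma> F G \<mu> (Ns n) j k)
             + hat (\<rho>s n) i (Phi (-1) \<phi> (\<epsilon>s n) (\<rho>s n) (hs n) \<sigma> F G \<mu> (Ns n) j k))
          summable_on UNIV \<and>
        infsum (\<lambda>j. hat (\<rho>s n) i (Phi 1 \<phi> (\<epsilon>s n) (\<rho>s n) (hs n) \<sigma> F G \<mu> (Ns n) j k)
             + hat (\<rho>s n) i (Phi (-1) \<phi> (\<epsilon>s n) (\<rho>s n) (hs n) \<sigma> F G \<mu> (Ns n) j k)) UNIV / 2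
          \<le> 1 + c * hs n)"
proof -
  \<comment> \<open>Only the bounds of (A1) on \<open>F\<close>, \<open>G\<close> and \<open>hs \<longlonglongrightarrow> 0\<close> are needed; \<open>\<sigma>\<close>, \<open>m0\<close>,
    \<open>\<rho>s\<close> and \<open>\<epsilon>s\<close> may be arbitrary here.\<close>
  obtain CF CG where F: "bounded_semiconcave CF F" "CF \<ge> 0" and G: "bounded_semiconcave CG G" "CG \<ge> 0"
    using A1_coeff_imp_bounded_semiconcave[OF F_A1] A1_coeff_imp_bounded_semiconcave[OF G_A1] by blast
  define K where "K = CG + T * CF + 1"
  have K: "K > 0" unfolding K_def using F G T_pos by (simp add: add_nonneg_pos)
  obtain n0 where n0: "\<And>n. n \<ge> n0 \<Longrightarrow> hs n < 1 / (4 * K)"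
    using order_tendstoD(2)[OF lim(2), of "1 / (4 * K)"] K unfolding eventually_sequentially by auto
  have hK: "hs n * K \<le> 1/4" if "n \<ge> n0" for n
    using mult_strict_right_mono[OF n0[OF that] K] K by simp
  have "0 \<le> hs n * K" "CG + T * CF \<le> K" for n
    using pos[of n] K unfolding K_def by simp_all
  note est = Phi_estimates[OF \<phi>_moll _ _ _ _ Ns_def F G(1) this(2,1) hK]
  show ?thesis
    using K pos est by (intro exI[of _ "2 * K"] conjI exI[of _ n0] allI impI) auto
qed

end
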